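(* Let $\mathcal{H}$ be a real Hilbert space, let $A:\mathcal{H}\rightrightarrows\mathcal{H}$ be maximal monotone with $A^{-1}(0)\neq\emptyset$, let $\theta>0$, let $p\geq1$ be an integer, and let $(x,\lambda):[0,+\infty)\to\mathcal{H}\times(0,+\infty)$ be a global solution of \[ \dot{x}(t)+x(t)-(I+\lambda(t)A)^{-1}x(t)=0,\qquad \lambda(t)\,\|(I+\lambda(t)A)^{-1}x(t)-x(t)\|^{p-1}=\theta, \] with $x(0)\in\{x\in\mathcal{H}:0\notin Ax\}$. Suppose that either (i) $A=\nabla\Phi$ where $\Phi:\mathcal{H}\to\mathbb{R}\cup\{+\infty\}$ is convex, differentiable and inf-compact, or (ii) $A^{-1}(0)$ has nonempty interior. Then there exists $\bar{x}\in A^{-1}(0)$ such that $x(t)$ converges strongly to $\bar{x}$ as $t\to+\infty$.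
   Context: $(I+\lambda A)^{-1}$ is the resolvent of $A$ of index $\lambda>0$; $A^{-1}(0)=\{x:0\in Ax\}$. A function $\Phi$ is inf-compact if for every $r>0$ and $\kappa\in\mathbb{R}$ the set $\{x\in\mathcal{H}:\|x\|\leq r,\ \Phi(x)\leq\kappa\}$ is relatively compact in $\mathcal{H}$. *)

theory Defs
  imports "HOL-Analysis.Analysis"
begin

text \<open>Set-valued operators on a real Hilbert space are modelled as functions
  A :: 'a \<Rightarrow> 'a set (graph = pairs (x,u) with u \<in> A x).\<close>

definition monotone_op :: "('a::real_inner \<Rightarrow> 'a set) \<Rightarrow> bool" where
  "monotone_op A \<longleftrightarrow>
     (\<forall>x y u v. u \<in> A x \<longrightarrow> v \<in> A y \<longrightarrow> inner (u - v) (x - y) \<ge> 0)"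

definition maximal_monotone :: "('a::real_inner \<Rightarrow> 'a set) \<Rightarrow> bool" where
  "maximal_monotone A \<longleftrightarrow> monotone_op A \<and>
     (\<forall>x u. (\<forall>y v. v \<in> A y \<longrightarrow> inner (u - v) (x - y) \<ge> 0) \<longrightarrow> u \<in> A x)"

text \<open>Resolvent (I + lam A)^{-1} x: the (for maximal monotone A and lam > 0, unique)
  point y with x \<in> y + lam A y.\<close>
definition resolvent :: "('a::real_inner \<Rightarrow> 'a set) \<Rightarrow> real \<Rightarrow> 'a \<Rightarrow> 'a" where
  "resolvent A lam x = (THE y. \<exists>u \<in> A y. x = y + lam *\<^sub>R u)"

definition zeros_op :: "('a::real_inner \<Rightarrow> 'a set) \<Rightarrow> 'a set" where
  "zeros_op A = {x. 0 \<in> A x}"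

definition edom :: "('a \<Rightarrow> ereal) \<Rightarrow> 'a set" where
  "edom \<Phi> = {x. \<Phi> x < \<infinity>}"

definition econvex :: "('a::real_vector \<Rightarrow> ereal) \<Rightarrow> bool" where
  "econvex \<Phi> \<longleftrightarrow> (\<forall>x y t. 0 \<le> t \<longrightarrow> t \<le> 1 \<longrightarrow>
      \<Phi> ((1 - t) *\<^sub>R x + t *\<^sub>R y) \<le> ereal (1 - t) * \<Phi> x + ereal t * \<Phi> y)"

definition edifferentiable :: "('a::real_normed_vector \<Rightarrow> ereal) \<Rightarrow> bool" where
  "edifferentiable \<Phi> \<longleftrightarrow> open (edom \<Phi>) \<and>
      (\<forall>x \<in> edom \<Phi>. (\<lambda>y. real_of_ereal (\<Phi> y)) differentiable (at x))"

definition egradient_op :: "('a::real_inner \<Rightarrow> ereal) \<Rightarrow> 'a \<Rightarrow> 'a set" where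
  "egradient_op \<Phi> x = {g. x \<in> edom \<Phi> \<and>
      ((\<lambda>y. real_of_ereal (\<Phi> y)) has_derivative (\<lambda>h. inner g h)) (at x)}"

definition inf_compact :: "('a::real_normed_vector \<Rightarrow> ereal) \<Rightarrow> bool" where
  "inf_compact \<Phi> \<longleftrightarrow> (\<forall>r>0. \<forall>\<kappa>::real. compact (closure {x. norm x \<le> r \<and> \<Phi> x \<le> ereal \<kappa>}))"

end

theory Submission
  imports Defs
begin

text \<open>
  For every zero z of A the velocity J - x of the flow satisfies
  <J - x, x - z> \<le> -|J - x|^2 by monotonicity, so |x(t) - z| is nonincreasing (Fejer
  monotonicity), and |J - x| cannot stay bounded away from 0, since otherwise
  |x(t) - z|^2 would decrease at a fixed positive rate forever. Along times s_n \<rightarrow> \<infinity> with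
  J - x \<rightarrow> 0, the large-step condition lam |J - x|^(p-1) = \<theta> turns this into
  (x - J)/lam \<rightarrow> 0, and (x - J)/lam \<in> A J. As the graph of A is closed, every limit of
  J(s_n) along a subsequence is a zero of A, and Fejer monotonicity upgrades convergence
  along the subsequence to convergence of x. Such a limit exists in case (i) because the
  J(s_n) stay in a bounded sublevel set of \<Phi> (subgradient inequality at a zero), and in
  case (ii) because a ball cball c r of zeros gives
  2r |x(t) - x(s)| \<le> |x(s) - c|^2 - |x(t) - c|^2, so x has finite length.

  The resolvent is well defined by Minty's theorem, which follows by minimising the
  strongly convex function F_B + |.|^2/2, where F_B is the Fitzpatrick function of the
  maximal monotone operator B.
\<close>

section \<open>Monotone operators\<close>

lemma monotone_opD:
  "monotone_op A \<Longrightarrow> u \<in> A x \<Longrightarrow> v \<in> A y \<Longrightarrow> 0 \<le> inner (u - v) (x - y)"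
  unfolding monotone_op_def by blast

lemma maximal_monotone_imp_monotone_op: "maximal_monotone A \<Longrightarrow> monotone_op A"
  unfolding maximal_monotone_def by blast

lemma maximal_monotoneD:
  "maximal_monotone A \<Longrightarrow> (\<And>y v. v \<in> A y \<Longrightarrow> 0 \<le> inner (u - v) (x - y)) \<Longrightarrow> u \<in> A x"
  unfolding maximal_monotone_def by blast

lemma maximal_monotone_graph_nonempty: "maximal_monotone A \<Longrightarrow> Sigma UNIV A \<noteq> {}"
  using maximal_monotoneD[of A 0 0] by blast

lemma maximal_monotone_closed_graph:
  fixes A :: "'a::real_inner \<Rightarrow> 'a set"
  assumes "maximal_monotone A"
  shows "closed (Sigma UNIV A)"
proof -
  have "Sigma UNIV A = (\<Inter>(a, b) \<in> Sigma UNIV A. {w. 0 \<le> inner (snd w - b) (fst w - a)})"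
  proof (intro equalityI subsetI)
    fix w assume "w \<in> Sigma UNIV A"
    then show "w \<in> (\<Inter>(a, b) \<in> Sigma UNIV A. {w. 0 \<le> inner (snd w - b) (fst w - a)})"
      using monotone_opD[OF maximal_monotone_imp_monotone_op[OF assms]] by auto
  next
    fix w assume "w \<in> (\<Inter>(a, b) \<in> Sigma UNIV A. {w. 0 \<le> inner (snd w - b) (fst w - a)})"
    then have "snd w \<in> A (fst w)"
      by (intro maximal_monotoneD[OF assms]) auto
    then show "w \<in> Sigma UNIV A" by (cases w) auto
  qed
  moreover have "closed {w. 0 \<le> inner (snd w - b) (fst w - a)}" for a b :: 'a
    by (intro closed_Collect_le continuous_intros)
  ultimately show ?thesis
    by (metis (no_types, lifting) case_prod_unfold closed_INT)
qed

section \<open>The Fitzpatrick function\<close>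

text \<open>F_B(x, u) is the supremum of <x, v> + <y, u> - <y, v> over the graph of B, written
  with the inner product of the product space. Its value is only meaningful on
  fitzpatrick_dom B, where the supremum is finite.\<close>

definition fitzpatrick_dom :: "('a::real_inner \<Rightarrow> 'a set) \<Rightarrow> ('a \<times> 'a) set" where
  "fitzpatrick_dom B = {w. bdd_above ((\<lambda>(y, v). inner w (v, y) - inner y v) ` Sigma UNIV B)}"

definition fitzpatrick :: "('a::real_inner \<Rightarrow> 'a set) \<Rightarrow> 'a \<times> 'a \<Rightarrow> real" where
  "fitzpatrick B w = (SUP (y, v) \<in> Sigma UNIV B. inner w (v, y) - inner y v)"

lemma fitzpatrick_upper:
  "w \<in> fitzpatrick_dom B \<Longrightarrow> v \<in> B y \<Longrightarrow> inner w (v, y) - inner y v \<le> fitzpatrick B w"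
  unfolding fitzpatrick_dom_def fitzpatrick_def by (rule cSup_upper) force+

lemma fitzpatrick_graph:
  assumes "monotone_op B" and "u \<in> B x"
  shows "(x, u) \<in> fitzpatrick_dom B" and "fitzpatrick B (x, u) = inner x u"
proof -
  have le: "inner (x, u) (v, y) - inner y v \<le> inner x u" if "v \<in> B y" for y v
  proof -
    have "0 \<le> inner (u - v) (x - y)"
      using monotone_opD[OF assms(1,2) that] .
    then show ?thesis
      by (simp add: inner_diff_left inner_diff_right inner_commute)
  qed
  then show dom: "(x, u) \<in> fitzpatrick_dom B"
    unfolding fitzpatrick_dom_def by (auto intro!: bdd_aboveI2)
  show "fitzpatrick B (x, u) = inner x u"
    unfolding fitzpatrick_def
  proof (rule cSup_eq_maximum)
    show "inner x u \<in> (\<lambda>(y, v). inner (x, u) (v, y) - inner y v) ` Sigma UNIV B"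
      using assms(2) by (force simp: inner_commute)
  qed (use le in auto)
qed

lemma fitzpatrick_ge_inner:
  assumes "maximal_monotone B" and "(x, u) \<in> fitzpatrick_dom B"
  shows "inner x u \<le> fitzpatrick B (x, u)"
proof (cases "u \<in> B x")
  case True
  then show ?thesis
    using fitzpatrick_graph(2)[OF maximal_monotone_imp_monotone_op[OF assms(1)] True] by simp
next
  case False
  then obtain y v where "v \<in> B y" and "inner (u - v) (x - y) < 0"
    using maximal_monotoneD[OF assms(1)] by (meson not_le)
  moreover have "inner (u - v) (x - y) = inner x u - (inner (x, u) (v, y) - inner y v)"
    by (simp add: inner_diff_left inner_diff_right inner_commute)
  ultimately show ?thesis
    using fitzpatrick_upper[OF assms(2)] by fastforce
qed

lemma convex_on_fitzpatrick:
  assumes "Sigma UNIV B \<noteq> {}"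
  shows "convex_on (fitzpatrick_dom B) (fitzpatrick B)"
proof -
  have *: "(1 - t) *\<^sub>R w1 + t *\<^sub>R w2 \<in> fitzpatrick_dom B \<and>
      fitzpatrick B ((1 - t) *\<^sub>R w1 + t *\<^sub>R w2) \<le> (1 - t) * fitzpatrick B w1 + t * fitzpatrick B w2"
    if w: "w1 \<in> fitzpatrick_dom B" "w2 \<in> fitzpatrick_dom B" and t: "0 \<le> t" "t \<le> 1" for w1 w2 t
  proof -
    have le: "inner ((1 - t) *\<^sub>R w1 + t *\<^sub>R w2) (v, y) - inner y v
        \<le> (1 - t) * fitzpatrick B w1 + t * fitzpatrick B w2" if "v \<in> B y" for y v
    proof -
      have "inner ((1 - t) *\<^sub>R w1 + t *\<^sub>R w2) (v, y) - inner y v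
          = (1 - t) * (inner w1 (v, y) - inner y v) + t * (inner w2 (v, y) - inner y v)"
        by (simp add: inner_add_left algebra_simps)
      also have "\<dots> \<le> (1 - t) * fitzpatrick B w1 + t * fitzpatrick B w2"
        using t fitzpatrick_upper[OF w(1) that] fitzpatrick_upper[OF w(2) that]
        by (intro add_mono mult_left_mono) auto
      finally show ?thesis .
    qed
    then show ?thesis
      unfolding fitzpatrick_dom_def fitzpatrick_def using assms
      by (auto intro!: bdd_aboveI2 cSup_least)
  qed
  show ?thesis
  proof (rule convex_onI)
    show "convex (fitzpatrick_dom B)"
      unfolding convex_alt using * by blast
  qed (use * in auto)
qed

lemma closed_fitzpatrick_epigraph:
  assumes "Sigma UNIV B \<noteq> {}"
  shows "closed {(w, c). w \<in> fitzpatrick_dom B \<and> fitzpatrick B w \<le> c}"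
proof -
  have "{(w, c). w \<in> fitzpatrick_dom B \<and> fitzpatrick B w \<le> c}
      = (\<Inter>(y, v) \<in> Sigma UNIV B. {(w, c). inner w (v, y) - inner y v \<le> c})"
  proof (intro equalityI subsetI)
    fix wc assume "wc \<in> {(w, c). w \<in> fitzpatrick_dom B \<and> fitzpatrick B w \<le> c}"
    then show "wc \<in> (\<Inter>(y, v) \<in> Sigma UNIV B. {(w, c). inner w (v, y) - inner y v \<le> c})"
      using fitzpatrick_upper by fastforce
  next
    fix wc assume "wc \<in> (\<Inter>(y, v) \<in> Sigma UNIV B. {(w, c). inner w (v, y) - inner y v \<le> c})"
    then show "wc \<in> {(w, c). w \<in> fitzpatrick_dom B \<and> fitzpatrick B w \<le> c}"
      unfolding fitzpatrick_dom_def fitzpatrick_def using assms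
      by (cases wc) (force intro!: bdd_aboveI2 cSup_least)
  qed
  moreover have "closed {(w, c). inner w (v, y) - inner y v \<le> c}" for y v :: 'a
    unfolding case_prod_unfold by (intro closed_Collect_le continuous_intros)
  ultimately show ?thesis
    by (metis (no_types, lifting) case_prod_unfold closed_INT)
qed

section \<open>Strongly convex functions\<close>

definition strongly_convex_on :: "'a::real_inner set \<Rightarrow> ('a \<Rightarrow> real) \<Rightarrow> bool" where
  "strongly_convex_on D G \<longleftrightarrow> convex_on D (\<lambda>w. G w - (norm w)\<^sup>2 / 2)"

lemma norm_convex_combination_sq:
  fixes a b :: "'a::real_inner"
  shows "(norm ((1 - t) *\<^sub>R a + t *\<^sub>R b))\<^sup>2
    = (1 - t) * (norm a)\<^sup>2 + t * (norm b)\<^sup>2 - t * (1 - t) * (norm (a - b))\<^sup>2"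
  by (simp add: power2_norm_eq_inner inner_add_left inner_add_right inner_diff_left
      inner_diff_right inner_commute algebra_simps)

lemma strongly_convex_onD:
  assumes "strongly_convex_on D G" "x \<in> D" "y \<in> D" "0 \<le> t" "t \<le> 1"
  shows "G ((1 - t) *\<^sub>R x + t *\<^sub>R y) \<le> (1 - t) * G x + t * G y - t * (1 - t) / 2 * (norm (x - y))\<^sup>2"
proof -
  have "G ((1 - t) *\<^sub>R x + t *\<^sub>R y) - (norm ((1 - t) *\<^sub>R x + t *\<^sub>R y))\<^sup>2 / 2
      \<le> (1 - t) * (G x - (norm x)\<^sup>2 / 2) + t * (G y - (norm y)\<^sup>2 / 2)"
    using convex_onD[OF assms(1)[unfolded strongly_convex_on_def] assms(4,5,2,3)] .
  then show ?thesis
    unfolding norm_convex_combination_sq by (simp add: field_simps)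
qed

lemma strongly_convex_on_imp_convex: "strongly_convex_on D G \<Longrightarrow> convex D"
  unfolding strongly_convex_on_def convex_on_def by blast

lemma strongly_convex_on_minimizer_growth:
  assumes G: "strongly_convex_on D G" and z: "z \<in> D" "\<And>w. w \<in> D \<Longrightarrow> G z \<le> G w"
    and y: "y \<in> D"
  shows "(norm (y - z))\<^sup>2 / 2 \<le> G y - G z"
proof -
  have "(1 - t) * (norm (y - z))\<^sup>2 / 2 \<le> G y - G z" if t: "0 < t" "t \<le> 1" for t
  proof -
    have "(1 - t) *\<^sub>R z + t *\<^sub>R y \<in> D"
      using convexD_alt[OF strongly_convex_on_imp_convex[OF G] z(1) y] t by simp
    then have "G z \<le> (1 - t) * G z + t * G y - t * (1 - t) / 2 * (norm (z - y))\<^sup>2"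
      using z(2) strongly_convex_onD[OF G z(1) y, of t] t by fastforce
    then have "t * ((1 - t) * (norm (y - z))\<^sup>2 / 2) \<le> t * (G y - G z)"
      by (simp add: norm_minus_commute algebra_simps)
    then show ?thesis
      using t by simp
  qed
  then have "eventually (\<lambda>t. (1 - t) * (norm (y - z))\<^sup>2 / 2 \<le> G y - G z) (at_right 0)"
    by (auto simp: eventually_at_right_field intro: exI[of _ 1])
  moreover have "((\<lambda>t. (1 - t) * (norm (y - z))\<^sup>2 / 2) \<longlongrightarrow> (norm (y - z))\<^sup>2 / 2) (at_right 0)"
    by (auto intro!: tendsto_eq_intros)
  ultimately show ?thesis
    by (intro tendsto_upperbound) auto
qed

lemma strongly_convex_on_minimizing_seq_Cauchy:
  fixes w :: "nat \<Rightarrow> 'a::real_inner"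
  assumes G: "strongly_convex_on D G" and w: "\<And>n. w n \<in> D"
    and m: "\<And>y. y \<in> D \<Longrightarrow> m \<le> G y" and lim: "(\<lambda>n. G (w n)) \<longlonglongrightarrow> m"
  shows "Cauchy w"
proof (rule metric_CauchyI)
  fix e :: real assume "e > 0"
  have gap: "(\<lambda>n. G (w n) - m) \<longlonglongrightarrow> 0"
    using Lim_null[THEN iffD1, OF lim] .
  obtain N where N: "\<And>n. n \<ge> N \<Longrightarrow> G (w n) - m < e\<^sup>2 / 8"
    using order_tendstoD(2)[OF gap, of "e\<^sup>2 / 8"] \<open>e > 0\<close>
    by (auto simp: eventually_sequentially)
  have "dist (w j) (w k) < e" if "j \<ge> N" "k \<ge> N" for j k
  proof -
    have "(1 - 1 / 2) *\<^sub>R w j + (1 / 2) *\<^sub>R w k \<in> D"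
      using convexD[OF strongly_convex_on_imp_convex[OF G] w w, of "1 - 1 / 2" "1 / 2"] by simp
    then have "(norm (w j - w k))\<^sup>2 \<le> 4 * (G (w j) - m) + 4 * (G (w k) - m)"
      using m strongly_convex_onD[OF G w w, of "1 / 2" j k] by fastforce
    then have "(norm (w j - w k))\<^sup>2 < e\<^sup>2"
      using N[OF that(1)] N[OF that(2)] by argo
    then show ?thesis
      using \<open>e > 0\<close> by (simp add: dist_norm power2_less_imp_less)
  qed
  then show "\<exists>M. \<forall>j\<ge>M. \<forall>k\<ge>M. dist (w j) (w k) < e"
    by blast
qed

lemma strongly_convex_on_has_minimizer:
  fixes G :: "'a::{real_inner,complete_space} \<Rightarrow> real"
  assumes G: "strongly_convex_on D G" and "D \<noteq> {}" and bdd: "bdd_below (G ` D)"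
    and closed_epigraph: "closed {(w, c). w \<in> D \<and> G w \<le> c}"
  obtains z where "z \<in> D" and "\<And>w. w \<in> D \<Longrightarrow> G z \<le> G w"
proof -
  define m where "m = Inf (G ` D)"
  have m_le: "m \<le> G w" if "w \<in> D" for w
    unfolding m_def using bdd that by (simp add: cInf_lower)
  have "\<exists>w\<in>D. G w < m + 1 / Suc n" for n :: nat
    using cInf_lessD[of "G ` D" "m + 1 / Suc n"] \<open>D \<noteq> {}\<close> by (simp add: m_def)
  then obtain w where w: "\<And>n. w n \<in> D" "\<And>n. G (w n) < m + 1 / Suc n"
    by metis
  have "(\<lambda>n. G (w n) - m) \<longlonglongrightarrow> 0"
  proof (rule LIMSEQ_norm_0)
    show "norm (G (w n) - m) < 1 / Suc n" for n
      using w[of n] m_le[OF w(1)] by simp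
  qed
  then have "(\<lambda>n. G (w n)) \<longlonglongrightarrow> m"
    by (rule Lim_null[THEN iffD2])
  then have "Cauchy w"
    using strongly_convex_on_minimizing_seq_Cauchy[OF G w(1) m_le] by simp
  then obtain z where "w \<longlonglongrightarrow> z"
    using Cauchy_convergent_iff convergent_def by blast
  moreover have "(\<lambda>n. m + 1 / Suc n) \<longlonglongrightarrow> m"
    using tendsto_add[OF tendsto_const LIMSEQ_inverse_real_of_nat, of m]
    by (simp add: inverse_eq_divide)
  ultimately have lim: "(\<lambda>n. (w n, m + 1 / Suc n)) \<longlonglongrightarrow> (z, m)"
    by (rule tendsto_Pair)
  have "(z, m) \<in> {(w, c). w \<in> D \<and> G w \<le> c}"
    by (rule closed_sequentially[OF closed_epigraph _ lim]) (use w in \<open>auto simp: less_imp_le\<close>)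
  then show ?thesis
    using m_le by (intro that) (auto intro: order_trans)
qed

section \<open>Minty's theorem and the resolvent\<close>

lemma strongly_convex_on_fitzpatrick:
  assumes "Sigma UNIV B \<noteq> {}"
  shows "strongly_convex_on (fitzpatrick_dom B) (\<lambda>w. fitzpatrick B w + (norm w)\<^sup>2 / 2)"
  unfolding strongly_convex_on_def using convex_on_fitzpatrick[OF assms] by simp

lemma fitzpatrick_plus_half_norm_sq_nonneg:
  assumes "maximal_monotone B" and "w \<in> fitzpatrick_dom B"
  shows "0 \<le> fitzpatrick B w + (norm w)\<^sup>2 / 2"
proof -
  obtain x u where w: "w = (x, u)"
    by fastforce
  have "inner x u \<le> fitzpatrick B w"
    using fitzpatrick_ge_inner assms w by simp
  moreover have "(norm (x + u))\<^sup>2 = (norm x)\<^sup>2 + 2 * inner x u + (norm u)\<^sup>2"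
    by (simp add: power2_norm_eq_inner inner_add_left inner_add_right inner_commute)
  moreover have "(norm w)\<^sup>2 = (norm x)\<^sup>2 + (norm u)\<^sup>2"
    by (simp add: w norm_Pair)
  moreover have "0 \<le> (norm (x + u))\<^sup>2"
    by simp
  ultimately show ?thesis
    by argo
qed

lemma fitzpatrick_plus_half_norm_sq_has_minimizer:
  fixes B :: "'a::{real_inner,complete_space} \<Rightarrow> 'a set"
  assumes B: "maximal_monotone B"
  obtains w where "w \<in> fitzpatrick_dom B"
    and "\<And>w'. w' \<in> fitzpatrick_dom B \<Longrightarrow>
      fitzpatrick B w + (norm w)\<^sup>2 / 2 \<le> fitzpatrick B w' + (norm w')\<^sup>2 / 2"
proof (rule strongly_convex_on_has_minimizer)
  have graph: "Sigma UNIV B \<noteq> {}"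
    by (rule maximal_monotone_graph_nonempty[OF B])
  show "strongly_convex_on (fitzpatrick_dom B) (\<lambda>w. fitzpatrick B w + (norm w)\<^sup>2 / 2)"
    by (rule strongly_convex_on_fitzpatrick[OF graph])
  show "fitzpatrick_dom B \<noteq> {}"
    using graph fitzpatrick_graph(1)[OF maximal_monotone_imp_monotone_op[OF B]] by auto
  show "bdd_below ((\<lambda>w. fitzpatrick B w + (norm w)\<^sup>2 / 2) ` fitzpatrick_dom B)"
    using fitzpatrick_plus_half_norm_sq_nonneg[OF B] by (intro bdd_belowI2) auto
  have "closed ((\<lambda>p. (fst p, snd p - (norm (fst p))\<^sup>2 / 2)) -`
      {(w, c). w \<in> fitzpatrick_dom B \<and> fitzpatrick B w \<le> c})"
    by (intro continuous_closed_vimage closed_fitzpatrick_epigraph[OF graph] continuous_intros) auto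
  then show "closed {(w, c). w \<in> fitzpatrick_dom B \<and> fitzpatrick B w + (norm w)\<^sup>2 / 2 \<le> c}"
    by (simp add: vimage_def case_prod_unfold le_diff_eq)
qed (rule that)

text \<open>At a minimiser (x, u) of F_B + |.|^2/2 the minimiser growth gives
  |x + u|^2 \<le> <a + u, b + x> for every b \<in> B a, so -x \<in> B (-u) by maximality, and
  testing with that point forces x = -u.\<close>
lemma maximal_monotone_ex_neg_mem:
  fixes B :: "'a::{real_inner,complete_space} \<Rightarrow> 'a set"
  assumes B: "maximal_monotone B"
  obtains y where "- y \<in> B y"
proof -
  have mono: "monotone_op B"
    by (rule maximal_monotone_imp_monotone_op[OF B])
  obtain w where w: "w \<in> fitzpatrick_dom B" and min: "\<And>w'. w' \<in> fitzpatrick_dom B \<Longrightarrow>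
      fitzpatrick B w + (norm w)\<^sup>2 / 2 \<le> fitzpatrick B w' + (norm w')\<^sup>2 / 2"
    using fitzpatrick_plus_half_norm_sq_has_minimizer[OF B] by blast
  obtain x u where xu: "w = (x, u)"
    by fastforce
  have key: "(norm (x + u))\<^sup>2 \<le> inner (a + u) (b + x)" if ab: "b \<in> B a" for a b
  proof -
    have "(norm ((a, b) - (x, u)))\<^sup>2 / 2
        \<le> fitzpatrick B (a, b) + (norm (a, b))\<^sup>2 / 2 - (fitzpatrick B (x, u) + (norm (x, u))\<^sup>2 / 2)"
      using strongly_convex_on_minimizer_growth[OF strongly_convex_on_fitzpatrick w min
          fitzpatrick_graph(1)[OF mono ab]] maximal_monotone_graph_nonempty[OF B] xu by simp
    moreover have "fitzpatrick B (a, b) = inner a b"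
      by (rule fitzpatrick_graph(2)[OF mono ab])
    moreover have "inner x u \<le> fitzpatrick B (x, u)"
      using fitzpatrick_ge_inner[OF B] w xu by simp
    ultimately show ?thesis
      by (simp add: power2_norm_eq_inner inner_add_left inner_add_right
          inner_diff_left inner_diff_right inner_commute field_simps)
  qed
  have "- x \<in> B (- u)"
  proof (rule maximal_monotoneD[OF B])
    fix a b assume "b \<in> B a"
    then have "0 \<le> inner (a + u) (b + x)"
      using key by (meson order_trans zero_le_power2)
    then show "0 \<le> inner (- x - b) (- u - a)"
      by (simp add: inner_diff_left inner_diff_right inner_add_left inner_add_right inner_commute)
  qed
  moreover from key[OF this] have "x = - u"
    by (simp add: eq_neg_iff_add_eq_0)
  ultimately show ?thesis
    by (intro that[of "- u"]) simp
qed

lemma maximal_monotone_shift_scale: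
  fixes A :: "'a::real_inner \<Rightarrow> 'a set"
  assumes A: "maximal_monotone A" and "c > 0"
  shows "maximal_monotone (\<lambda>y. (\<lambda>v. c *\<^sub>R v) ` A (y + a))"
  unfolding maximal_monotone_def monotone_op_def
proof (intro conjI allI impI)
  fix y1 y2 u v
  assume "u \<in> (\<lambda>v. c *\<^sub>R v) ` A (y1 + a)" "v \<in> (\<lambda>v. c *\<^sub>R v) ` A (y2 + a)"
  then obtain u' v' where "u = c *\<^sub>R u'" "v = c *\<^sub>R v'" "u' \<in> A (y1 + a)" "v' \<in> A (y2 + a)"
    by blast
  moreover have "0 \<le> inner (u' - v') ((y1 + a) - (y2 + a))"
    using monotone_opD[OF maximal_monotone_imp_monotone_op[OF A]] calculation(3,4) .
  ultimately show "0 \<le> inner (u - v) (y1 - y2)"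
    using \<open>c > 0\<close> by (simp flip: scaleR_diff_right)
next
  fix z u
  assume H: "\<forall>y v. v \<in> (\<lambda>v. c *\<^sub>R v) ` A (y + a) \<longrightarrow> 0 \<le> inner (u - v) (z - y)"
  have "(1 / c) *\<^sub>R u \<in> A (z + a)"
  proof (rule maximal_monotoneD[OF A])
    fix y v assume "v \<in> A y"
    then have "0 \<le> inner (u - c *\<^sub>R v) (z - (y - a))"
      using H by force
    moreover have "inner ((1 / c) *\<^sub>R u - v) (z + a - y) = (1 / c) * inner (u - c *\<^sub>R v) (z - (y - a))"
      using \<open>c > 0\<close> by (simp add: inner_diff_left inner_diff_right algebra_simps)
    ultimately show "0 \<le> inner ((1 / c) *\<^sub>R u - v) (z + a - y)"
      using \<open>c > 0\<close> by simp
  qed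
  then show "u \<in> (\<lambda>v. c *\<^sub>R v) ` A (z + a)"
    using \<open>c > 0\<close> by (intro image_eqI[of _ _ "(1 / c) *\<^sub>R u"]) auto
qed

lemma resolvent_eqI:
  fixes A :: "'a::real_inner \<Rightarrow> 'a set"
  assumes A: "monotone_op A" and "lam > 0" and u: "u \<in> A y" "x = y + lam *\<^sub>R u"
  shows "resolvent A lam x = y"
  unfolding resolvent_def
proof (rule the_equality)
  show "\<exists>u\<in>A y. x = y + lam *\<^sub>R u"
    using u by blast
next
  fix y' assume "\<exists>v\<in>A y'. x = y' + lam *\<^sub>R v"
  then obtain v where v: "v \<in> A y'" "x = y' + lam *\<^sub>R v"
    by blast
  have "y - y' = (- lam) *\<^sub>R (u - v)"
    using u(2) v(2) by (simp add: algebra_simps)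
  then have "0 \<le> - lam * inner (u - v) (u - v)"
    using monotone_opD[OF A u(1) v(1)] by simp
  then have "inner (u - v) (u - v) \<le> 0"
    using \<open>lam > 0\<close> by (simp add: mult_le_0_iff)
  then have "u = v"
    by (metis eq_iff_diff_eq_0 inner_eq_zero_iff inner_ge_zero order_antisym)
  then show "y' = y"
    using u(2) v(2) by simp
qed

lemma resolvent_mem:
  fixes A :: "'a::{real_inner,complete_space} \<Rightarrow> 'a set"
  assumes A: "maximal_monotone A" and lam: "lam > 0"
  shows "(x - resolvent A lam x) /\<^sub>R lam \<in> A (resolvent A lam x)"
proof -
  obtain y where "- y \<in> (\<lambda>v. lam *\<^sub>R v) ` A (y + x)"
    using maximal_monotone_ex_neg_mem[OF maximal_monotone_shift_scale[OF A lam]] .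
  then obtain v where v: "v \<in> A (y + x)" "- y = lam *\<^sub>R v"
    by blast
  then have "resolvent A lam x = y + x"
    by (intro resolvent_eqI[OF maximal_monotone_imp_monotone_op[OF A] lam]) (auto simp flip: v(2))
  then show ?thesis
    using v lam by simp
qed

lemma resolvent_zero_inner_nonneg:
  fixes A :: "'a::{real_inner,complete_space} \<Rightarrow> 'a set"
  assumes A: "maximal_monotone A" and lam: "lam > 0" and z: "z \<in> zeros_op A"
  shows "0 \<le> inner (x - resolvent A lam x) (resolvent A lam x - z)"
proof -
  have "0 \<in> A z"
    using z by (simp add: zeros_op_def)
  then have "0 \<le> inner ((x - resolvent A lam x) /\<^sub>R lam - 0) (resolvent A lam x - z)"
    by (rule monotone_opD[OF maximal_monotone_imp_monotone_op[OF A] resolvent_mem[OF A lam]])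
  then show ?thesis
    using lam by (simp add: zero_le_mult_iff)
qed

lemma norm_resolvent_diff_zero_le:
  fixes A :: "'a::{real_inner,complete_space} \<Rightarrow> 'a set"
  assumes "maximal_monotone A" and "lam > 0" and "z \<in> zeros_op A"
  shows "norm (resolvent A lam x - z) \<le> norm (x - z)"
proof -
  let ?J = "resolvent A lam x"
  have "(norm (x - z))\<^sup>2 = (norm (x - ?J))\<^sup>2 + 2 * inner (x - ?J) (?J - z) + (norm (?J - z))\<^sup>2"
    by (simp add: power2_norm_eq_inner inner_diff_left inner_diff_right inner_commute algebra_simps)
  then have "(norm (?J - z))\<^sup>2 \<le> (norm (x - z))\<^sup>2"
    using resolvent_zero_inner_nonneg[OF assms] by simp
  then show ?thesis
    by (rule power2_le_imp_le) simp
qed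

lemma has_real_derivative_norm_diff_sq:
  fixes x :: "real \<Rightarrow> 'a::real_inner"
  assumes "(x has_vector_derivative v) (at t within S)"
  shows "((\<lambda>s. (norm (x s - z))\<^sup>2) has_real_derivative 2 * inner v (x t - z)) (at t within S)"
proof -
  have "((\<lambda>s. inner (x s - z) (x s - z)) has_derivative
      (\<lambda>h. inner (x t - z) (h *\<^sub>R v) + inner (h *\<^sub>R v) (x t - z))) (at t within S)"
    using assms unfolding has_vector_derivative_def by (intro derivative_eq_intros) auto
  then show ?thesis
    unfolding has_field_derivative_def power2_norm_eq_inner
    by (rule has_derivative_eq_rhs) (auto simp: inner_commute algebra_simps)
qed

lemma has_real_derivative_inner_const:
  fixes x :: "real \<Rightarrow> 'a::real_inner"
  assumes "(x has_vector_derivative v) (at t within S)"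
  shows "((\<lambda>s. inner (x s) e) has_real_derivative inner v e) (at t within S)"
  using has_derivative_inner_left[OF assms[unfolded has_vector_derivative_def], of e]
  unfolding has_field_derivative_def by (rule has_derivative_eq_rhs) (auto simp: algebra_simps)

lemma DERIV_atLeast_nonpos_imp_decreasing:
  fixes f f' :: "real \<Rightarrow> real"
  assumes deriv: "\<And>t. a \<le> t \<Longrightarrow> (f has_real_derivative f' t) (at t within {a..})"
    and nonpos: "\<And>t. a \<le> t \<Longrightarrow> f' t \<le> 0" and "a \<le> s" "s \<le> t"
  shows "f t \<le> f s"
proof (rule DERIV_nonpos_imp_decreasing_open[OF \<open>s \<le> t\<close>])
  fix y assume "s < y" "y < t"
  then have "at y within {a..} = at y"
    using \<open>a \<le> s\<close> by (intro at_within_interior) auto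
  then show "\<exists>z. (f has_real_derivative z) (at y) \<and> z \<le> 0"
    using deriv[of y] nonpos[of y] \<open>s < y\<close> \<open>a \<le> s\<close> by auto
next
  have "continuous_on {a..} f"
    using deriv by (auto simp: continuous_on_eq_continuous_within intro: DERIV_continuous)
  then show "continuous_on {s..t} f"
    by (rule continuous_on_subset) (use \<open>a \<le> s\<close> in auto)
qed

lemma tendsto_at_top_if_dist_le_potential_decrease:
  fixes f :: "real \<Rightarrow> 'a::complete_space" and \<phi> :: "real \<Rightarrow> real"
  assumes dist: "\<And>s t. a \<le> s \<Longrightarrow> s \<le> t \<Longrightarrow> dist (f s) (f t) \<le> \<phi> s - \<phi> t"
    and bdd: "\<And>t. a \<le> t \<Longrightarrow> b \<le> \<phi> t"
  obtains L where "(f \<longlongrightarrow> L) at_top"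
proof -
  have bdd_below: "bdd_below (\<phi> ` {a..})"
    using bdd by (intro bdd_belowI2[where m = b]) simp
  have "\<exists>P. eventually P at_top \<and> (\<forall>s t. P s \<and> P t \<longrightarrow> dist (f s) (f t) < e)" if "e > 0" for e
  proof -
    obtain T where T: "a \<le> T" "\<phi> T < Inf (\<phi> ` {a..}) + e"
      using cInf_lessD[of "\<phi> ` {a..}" "Inf (\<phi> ` {a..}) + e"] \<open>e > 0\<close> by auto
    have "dist (f s) (f t) < e" if "T \<le> s" "s \<le> t" for s t
    proof -
      have "dist (f s) (f t) \<le> \<phi> s - \<phi> t"
        using dist that T(1) by simp
      moreover have "\<phi> s \<le> \<phi> T"
        using dist[of T s] that T(1) zero_le_dist[of "f T" "f s"] by linarith
      moreover have "Inf (\<phi> ` {a..}) \<le> \<phi> t"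
        using bdd_below that T(1) by (auto intro: cInf_lower)
      ultimately show ?thesis
        using T(2) by linarith
    qed
    then have "\<forall>s t. T \<le> s \<and> T \<le> t \<longrightarrow> dist (f s) (f t) < e"
      by (metis dist_commute nle_le)
    then show ?thesis
      by (intro exI[of _ "\<lambda>s. T \<le> s"]) (auto simp: eventually_ge_at_top)
  qed
  then have "cauchy_filter (filtermap f at_top)"
    by (simp add: cauchy_filter_metric_filtermap)
  then obtain L where "filtermap f at_top \<le> nhds L"
    using cauchy_filter_complete_converges[OF _ complete_UNIV, of "filtermap f at_top"]
    by (auto simp: filtermap_bot_iff)
  then show ?thesis
    by (intro that) (simp add: filterlim_def)
qed

lemma DERIV_le_chord:
  fixes h :: "real \<Rightarrow> real"
  assumes deriv: "(h has_real_derivative D) (at 0)"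
    and below_chord: "\<And>t. 0 < t \<Longrightarrow> t < 1 \<Longrightarrow> h t \<le> (1 - t) * h 0 + t * h 1"
  shows "D \<le> h 1 - h 0"
proof -
  have "((\<lambda>t. (h t - h 0) / t) \<longlongrightarrow> D) (at_right 0)"
    using deriv unfolding has_field_derivative_iff by (simp add: filterlim_at_split)
  moreover have "(h t - h 0) / t \<le> h 1 - h 0" if "0 < t" "t < 1" for t
  proof -
    have "h t - h 0 \<le> t * (h 1 - h 0)"
      using below_chord[OF that] by (simp add: algebra_simps)
    then show ?thesis
      using that by (simp add: divide_le_eq mult.commute)
  qed
  then have "eventually (\<lambda>t. (h t - h 0) / t \<le> h 1 - h 0) (at_right 0)"
    by (auto simp: eventually_at_right_field intro: exI[of _ 1])
  ultimately show ?thesis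
    by (rule tendsto_upperbound) simp
qed

lemma econvex_egradient_above_tangent:
  fixes \<Phi> :: "'a::real_inner \<Rightarrow> ereal"
  assumes ninf: "\<forall>y. \<Phi> y \<noteq> -\<infinity>" and cvx: "econvex \<Phi>" and g: "g \<in> egradient_op \<Phi> y"
  shows "\<Phi> y + ereal (inner g (z - y)) \<le> \<Phi> z"
proof (cases "\<Phi> z = \<infinity>")
  case False
  define f where "f = (\<lambda>w. real_of_ereal (\<Phi> w))"
  have finite: "\<Phi> w = ereal (f w)" if "\<Phi> w \<noteq> \<infinity>" for w
    using that ninf by (cases "\<Phi> w") (auto simp: f_def)
  have y: "\<Phi> y \<noteq> \<infinity>" and fd: "(f has_derivative (\<lambda>h. inner g h)) (at y)"
    using g by (auto simp: egradient_op_def edom_def f_def)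
  define h where "h t = f (y + t *\<^sub>R (z - y))" for t :: real
  have segment: "((\<lambda>t. y + t *\<^sub>R (z - y)) has_derivative (\<lambda>t. t *\<^sub>R (z - y))) (at 0)"
    by (auto intro!: derivative_eq_intros)
  have "(h has_derivative (\<lambda>t. inner g (t *\<^sub>R (z - y)))) (at 0)"
    unfolding h_def by (rule has_derivative_compose[OF segment, of f]) (use fd in simp)
  then have "(h has_real_derivative inner g (z - y)) (at 0)"
    unfolding has_field_derivative_def by (rule has_derivative_eq_rhs) (auto simp: algebra_simps)
  moreover have "h t \<le> (1 - t) * h 0 + t * h 1" if "0 < t" "t < 1" for t
  proof -
    have "\<Phi> ((1 - t) *\<^sub>R y + t *\<^sub>R z) \<le> ereal (1 - t) * \<Phi> y + ereal t * \<Phi> z"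
      using cvx that unfolding econvex_def by auto
    also have "\<dots> = ereal ((1 - t) * f y + t * f z)"
      by (simp add: finite[OF y] finite[OF False])
    finally show ?thesis
      unfolding h_def f_def using ninf
      by (cases "\<Phi> ((1 - t) *\<^sub>R y + t *\<^sub>R z)") (auto simp: algebra_simps)
  qed
  ultimately have "inner g (z - y) \<le> f z - f y"
    using DERIV_le_chord[of h] by (simp add: h_def)
  then show ?thesis
    by (simp add: finite[OF y] finite[OF False])
qed simp

section \<open>The proximal flow\<close>

locale proximal_flow =
  fixes A :: "'a::{real_inner,complete_space} \<Rightarrow> 'a set"
    and lam :: "real \<Rightarrow> real" and x :: "real \<Rightarrow> 'a"
  assumes maximal_monotone: "maximal_monotone A"
    and lam_pos: "\<And>t. 0 \<le> t \<Longrightarrow> 0 < lam t"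
    and flow: "\<And>t. 0 \<le> t \<Longrightarrow>
      (x has_vector_derivative resolvent A (lam t) (x t) - x t) (at t within {0..})"
begin

abbreviation J :: "real \<Rightarrow> 'a" where
  "J t \<equiv> resolvent A (lam t) (x t)"

lemma inner_velocity_le:
  assumes "z \<in> zeros_op A" and "0 \<le> t"
  shows "inner (J t - x t) (x t - z) \<le> - (norm (J t - x t))\<^sup>2"
proof -
  have "inner (J t - x t) (x t - z) = - (norm (J t - x t))\<^sup>2 - inner (x t - J t) (J t - z)"
    by (simp add: power2_norm_eq_inner inner_diff_left inner_diff_right inner_commute algebra_simps)
  then show ?thesis
    using resolvent_zero_inner_nonneg[OF maximal_monotone lam_pos[OF assms(2)] assms(1)] by simp
qed

lemma has_real_derivative_dist_sq:
  "0 \<le> t \<Longrightarrow> ((\<lambda>s. (norm (x s - z))\<^sup>2) has_real_derivative 2 * inner (J t - x t) (x t - z))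
    (at t within {0..})"
  by (rule has_real_derivative_norm_diff_sq[OF flow])

lemma norm_diff_zeros_op_antimono:
  assumes z: "z \<in> zeros_op A" and "0 \<le> s" "s \<le> t"
  shows "norm (x t - z) \<le> norm (x s - z)"
proof -
  have "(norm (x t - z))\<^sup>2 \<le> (norm (x s - z))\<^sup>2"
  proof (rule DERIV_atLeast_nonpos_imp_decreasing[OF has_real_derivative_dist_sq _ assms(2,3)])
    show "2 * inner (J t - x t) (x t - z) \<le> 0" if "0 \<le> t" for t
      using inner_velocity_le[OF z that] by (smt (verit) zero_le_power2)
  qed
  then show ?thesis
    by (rule power2_le_imp_le) simp
qed

lemma tendsto_if_seq_tendsto_zeros_op:
  assumes z: "z \<in> zeros_op A" and s: "filterlim s at_top sequentially"
    and xs: "(\<lambda>n. x (s n)) \<longlonglongrightarrow> z"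
  shows "(x \<longlongrightarrow> z) at_top"
proof (rule tendstoI)
  fix e :: real assume "e > 0"
  have "eventually (\<lambda>n. dist (x (s n)) z < e \<and> 0 \<le> s n) sequentially"
    using tendstoD[OF xs \<open>e > 0\<close>] s by (auto simp: filterlim_at_top elim: eventually_conj)
  then obtain n where n: "dist (x (s n)) z < e" "0 \<le> s n"
    by (auto simp: eventually_sequentially)
  have "dist (x t) z < e" if "s n \<le> t" for t
    using norm_diff_zeros_op_antimono[OF z n(2) that] n(1) by (simp add: dist_norm)
  then show "eventually (\<lambda>t. dist (x t) z < e) at_top"
    by (auto simp: eventually_at_top_linorder)
qed

lemma frequently_small_velocity:
  assumes z: "z \<in> zeros_op A" and "0 < e" and "0 \<le> T"
  shows "\<exists>t\<ge>T. norm (J t - x t) < e"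
proof (rule ccontr)
  assume "\<not> ?thesis"
  then have large: "e \<le> norm (J t - x t)" if "T \<le> t" for t
    using that by (meson not_le)
  define V where "V t = (norm (x t - z))\<^sup>2 + 2 * e\<^sup>2 * t" for t
  have V_le: "V t \<le> V T" if "T \<le> t" for t
  proof (rule DERIV_atLeast_nonpos_imp_decreasing[OF _ _ order_refl that])
    fix t assume "T \<le> t"
    then have "0 \<le> t"
      using \<open>0 \<le> T\<close> by simp
    have "((\<lambda>s. (norm (x s - z))\<^sup>2) has_real_derivative 2 * inner (J t - x t) (x t - z)) (at t within {T..})"
      by (rule DERIV_subset[OF has_real_derivative_dist_sq[OF \<open>0 \<le> t\<close>]]) (use \<open>0 \<le> T\<close> in auto)
    then show "(V has_real_derivative 2 * inner (J t - x t) (x t - z) + 2 * e\<^sup>2) (at t within {T..})"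
      unfolding V_def by (rule DERIV_add) (auto intro!: derivative_eq_intros)
    have "e\<^sup>2 \<le> (norm (J t - x t))\<^sup>2"
      using large[OF \<open>T \<le> t\<close>] \<open>0 < e\<close> by (simp add: power_mono)
    then show "2 * inner (J t - x t) (x t - z) + 2 * e\<^sup>2 \<le> 0"
      using inner_velocity_le[OF z \<open>0 \<le> t\<close>] by simp
  qed
  define t where "t = T + ((norm (x T - z))\<^sup>2 + 1) / (2 * e\<^sup>2)"
  have "T \<le> t"
    using \<open>0 < e\<close> by (simp add: t_def)
  have "V T < 2 * e\<^sup>2 * t"
    using \<open>0 < e\<close> by (simp add: V_def t_def field_simps)
  also have "\<dots> \<le> V t"
    by (simp add: V_def)
  finally show False
    using V_le[OF \<open>T \<le> t\<close>] by simp
qed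

lemma velocity_tendsto_zero_along_seq:
  assumes "zeros_op A \<noteq> {}"
  obtains s where "\<And>n. 0 \<le> s n" and "filterlim s at_top sequentially"
    and "(\<lambda>n. J (s n) - x (s n)) \<longlonglongrightarrow> 0"
proof -
  obtain z where "z \<in> zeros_op A"
    using assms by blast
  then have "\<forall>n. \<exists>t\<ge>real n. norm (J t - x t) < 1 / Suc n"
    using frequently_small_velocity by simp
  then obtain s where s: "\<And>n. real n \<le> s n" "\<And>n. norm (J (s n) - x (s n)) < 1 / Suc n"
    by metis
  show ?thesis
  proof (rule that)
    show "0 \<le> s n" for n
      using s(1)[of n] by simp
    show "filterlim s at_top sequentially"
      by (rule filterlim_at_top_mono[OF filterlim_real_sequentially]) (use s(1) in auto)
    show "(\<lambda>n. J (s n) - x (s n)) \<longlonglongrightarrow> 0"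
      by (rule LIMSEQ_norm_0) (use s(2) in auto)
  qed
qed

lemma tendsto_zeros_op_if_resolvent_seq_tendsto:
  fixes s :: "nat \<Rightarrow> real"
  assumes s: "\<And>n. 0 \<le> s n" "filterlim s at_top sequentially"
    and velocity: "(\<lambda>n. J (s n) - x (s n)) \<longlonglongrightarrow> 0"
    and scaled_velocity: "(\<lambda>n. (x (s n) - J (s n)) /\<^sub>R lam (s n)) \<longlonglongrightarrow> 0"
    and J: "(\<lambda>n. J (s n)) \<longlonglongrightarrow> z"
  shows "z \<in> zeros_op A" and "(x \<longlongrightarrow> z) at_top"
proof -
  have "(z, 0) \<in> Sigma UNIV A"
    by (rule closed_sequentially[OF maximal_monotone_closed_graph[OF maximal_monotone] _
          tendsto_Pair[OF J scaled_velocity]])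
      (use resolvent_mem[OF maximal_monotone lam_pos[OF s(1)]] in auto)
  then show z: "z \<in> zeros_op A"
    by (simp add: zeros_op_def)
  have "(\<lambda>n. J (s n) - (J (s n) - x (s n))) \<longlonglongrightarrow> z - 0"
    by (rule tendsto_diff[OF J velocity])
  then show "(x \<longlongrightarrow> z) at_top"
    by (intro tendsto_if_seq_tendsto_zeros_op[OF z s(2)]) simp
qed

lemma scaled_velocity_tendsto_zero:
  fixes s :: "nat \<Rightarrow> real"
  assumes large_step: "\<And>t. 0 \<le> t \<Longrightarrow> lam t * (norm (J t - x t)) ^ (p - 1) = \<theta>"
    and "0 < \<theta>" and "1 \<le> p" and s: "\<And>n. 0 \<le> s n"
    and velocity: "(\<lambda>n. J (s n) - x (s n)) \<longlonglongrightarrow> 0"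
  shows "(\<lambda>n. (x (s n) - J (s n)) /\<^sub>R lam (s n)) \<longlonglongrightarrow> 0"
proof -
  have norm_eq: "norm ((x t - J t) /\<^sub>R lam t) = (norm (J t - x t)) ^ p / \<theta>" if "0 \<le> t" for t
  proof -
    have "(norm (J t - x t)) ^ (p - 1) \<noteq> 0"
      using large_step[OF that] \<open>0 < \<theta>\<close> by (metis mult_zero_right less_irrefl)
    have "norm ((x t - J t) /\<^sub>R lam t) = norm (J t - x t) / lam t"
      using lam_pos[OF that] by (simp add: norm_minus_commute divide_inverse_commute)
    also have "\<dots> = norm (J t - x t) * (norm (J t - x t)) ^ (p - 1) / \<theta>"
      using \<open>(norm (J t - x t)) ^ (p - 1) \<noteq> 0\<close> by (simp flip: large_step[OF that])
    also have "\<dots> = (norm (J t - x t)) ^ p / \<theta>"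
      using \<open>1 \<le> p\<close> by (simp flip: power_Suc)
    finally show ?thesis .
  qed
  have "(\<lambda>n. (norm (J (s n) - x (s n))) ^ p / \<theta>) \<longlonglongrightarrow> 0 ^ p / \<theta>"
    using \<open>0 < \<theta>\<close> by (auto intro!: tendsto_intros tendsto_norm_zero velocity)
  then have "(\<lambda>n. norm ((x (s n) - J (s n)) /\<^sub>R lam (s n))) \<longlonglongrightarrow> 0"
    unfolding norm_eq[OF s] using \<open>1 \<le> p\<close> by (simp add: power_0_left)
  then show ?thesis
    by (rule tendsto_norm_zero_cancel)
qed

lemma inner_velocity_le_if_cball_subset:
  assumes c: "cball c r \<subseteq> zeros_op A" and "0 \<le> r" and "0 \<le> t"
  shows "r * norm (J t - x t) + inner (J t - x t) (x t - c) \<le> 0"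
proof (cases "J t = x t")
  case False
  define d where "d = J t - x t"
  have "norm d > 0"
    using False by (simp add: d_def)
  define z where "z = c - (r / norm d) *\<^sub>R d"
  have "z \<in> zeros_op A"
    using c \<open>norm d > 0\<close> \<open>0 \<le> r\<close> by (auto simp: z_def dist_norm)
  then have "inner d (x t - z) \<le> 0"
    using inner_velocity_le[OF _ \<open>0 \<le> t\<close>] unfolding d_def by (smt (verit) zero_le_power2)
  moreover have "inner d (x t - z) = inner d (x t - c) + r * norm d"
    using \<open>norm d > 0\<close>
    by (simp add: z_def inner_diff_right inner_add_right power2_norm_eq_inner[symmetric] power2_eq_square)
  ultimately show ?thesis
    by (simp add: d_def)
qed simp

lemma length_le_if_cball_subset:
  assumes c: "cball c r \<subseteq> zeros_op A" and "0 < r" and st: "0 \<le> s" "s \<le> t"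
  shows "2 * r * norm (x t - x s) \<le> (norm (x s - c))\<^sup>2 - (norm (x t - c))\<^sup>2"
proof -
  define e where "e = (x t - x s) /\<^sub>R norm (x t - x s)"
  have "norm e \<le> 1"
    by (cases "x t = x s") (simp_all add: e_def)
  have "inner (x t) e - inner (x s) e = norm (x t - x s)"
  proof (cases "x t = x s")
    case False
    have "inner (x t) e - inner (x s) e = inner (x t - x s) (x t - x s) / norm (x t - x s)"
      by (simp add: e_def inner_diff_left divide_inverse algebra_simps)
    also have "\<dots> = norm (x t - x s)"
      using False by (simp add: dot_square_norm power2_eq_square)
    finally show ?thesis .
  qed simp
  moreover define V where "V u = 2 * r * inner (x u) e + (norm (x u - c))\<^sup>2" for u
  have "V t \<le> V s"
  proof (rule DERIV_atLeast_nonpos_imp_decreasing[OF _ _ st])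
    fix u :: real assume "0 \<le> u"
    show "(V has_real_derivative
        2 * r * inner (J u - x u) e + 2 * inner (J u - x u) (x u - c)) (at u within {0..})"
      unfolding V_def
      by (intro DERIV_add DERIV_cmult has_real_derivative_inner_const flow
          has_real_derivative_dist_sq \<open>0 \<le> u\<close>)
    have "inner (J u - x u) e \<le> norm (J u - x u) * norm e"
      using Cauchy_Schwarz_ineq2[of "J u - x u" e] by simp
    also have "\<dots> \<le> norm (J u - x u)"
      using \<open>norm e \<le> 1\<close> by (simp add: mult_left_le)
    finally have "r * inner (J u - x u) e \<le> r * norm (J u - x u)"
      using \<open>0 < r\<close> by simp
    then show "2 * r * inner (J u - x u) e + 2 * inner (J u - x u) (x u - c) \<le> 0"
      using inner_velocity_le_if_cball_subset[OF c less_imp_le[OF \<open>0 < r\<close>] \<open>0 \<le> u\<close>] by linarith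
  qed
  ultimately show ?thesis
    unfolding V_def by (simp add: algebra_simps)
qed

lemma convergent_if_interior_zeros_op:
  assumes "interior (zeros_op A) \<noteq> {}"
  obtains L where "(x \<longlongrightarrow> L) at_top"
proof -
  obtain c r where "0 < r" and c: "cball c r \<subseteq> zeros_op A"
    using assms by (metis equals0I interior_subset mem_interior_cball order_trans)
  show ?thesis
  proof (rule tendsto_at_top_if_dist_le_potential_decrease)
    show "dist (x s) (x t) \<le> (norm (x s - c))\<^sup>2 / (2 * r) - (norm (x t - c))\<^sup>2 / (2 * r)"
      if "0 \<le> s" "s \<le> t" for s t
      using length_le_if_cball_subset[OF c \<open>0 < r\<close> that] \<open>0 < r\<close>
      by (simp add: dist_norm norm_minus_commute field_simps)
    show "0 \<le> (norm (x t - c))\<^sup>2 / (2 * r)" for t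
      using \<open>0 < r\<close> by simp
  qed (rule that)
qed

lemma resolvent_in_sublevel_if_gradient:
  assumes ninf: "\<forall>y. \<Phi> y \<noteq> -\<infinity>" and cvx: "econvex \<Phi>" and A_eq: "A = egradient_op \<Phi>"
    and z0: "z0 \<in> zeros_op A" and "0 \<le> t" and bounded: "norm ((x t - J t) /\<^sub>R lam t) \<le> K"
  shows "norm (J t) \<le> norm z0 + norm (x 0 - z0)"
    and "\<Phi> (J t) \<le> \<Phi> z0 + ereal (K * norm (x 0 - z0))"
proof -
  let ?U = "(x t - J t) /\<^sub>R lam t" and ?R = "norm (x 0 - z0)"
  have dist: "norm (J t - z0) \<le> ?R"
    using norm_resolvent_diff_zero_le[OF maximal_monotone lam_pos[OF \<open>0 \<le> t\<close>] z0]
      norm_diff_zeros_op_antimono[OF z0 order_refl \<open>0 \<le> t\<close>] by (rule order_trans)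
  then show "norm (J t) \<le> norm z0 + ?R"
    using norm_triangle_sub[of "J t" z0] by simp
  have grad: "?U \<in> egradient_op \<Phi> (J t)"
    using resolvent_mem[OF maximal_monotone lam_pos[OF \<open>0 \<le> t\<close>]] by (simp add: A_eq)
  then have "\<Phi> (J t) \<noteq> \<infinity>"
    by (simp add: egradient_op_def edom_def)
  have "- inner ?U (z0 - J t) \<le> norm ?U * norm (z0 - J t)"
    using Cauchy_Schwarz_ineq2[of ?U "z0 - J t"] by simp
  also have "\<dots> \<le> K * ?R"
    using bounded dist order_trans[OF norm_ge_zero bounded]
    by (intro mult_mono) (auto simp: norm_minus_commute)
  finally show "\<Phi> (J t) \<le> \<Phi> z0 + ereal (K * ?R)"
    using econvex_egradient_above_tangent[OF ninf cvx grad, of z0] \<open>\<Phi> (J t) \<noteq> \<infinity>\<close> ninf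
    by (cases "\<Phi> z0"; cases "\<Phi> (J t)") auto
qed

lemma resolvent_subseq_convergent_if_inf_compact:
  fixes s :: "nat \<Rightarrow> real"
  assumes ninf: "\<forall>y. \<Phi> y \<noteq> -\<infinity>" and cvx: "econvex \<Phi>" and ic: "inf_compact \<Phi>"
    and A_eq: "A = egradient_op \<Phi>" and "zeros_op A \<noteq> {}" and s: "\<And>n. 0 \<le> s n"
    and scaled_velocity: "(\<lambda>n. (x (s n) - J (s n)) /\<^sub>R lam (s n)) \<longlonglongrightarrow> 0"
  obtains \<sigma> z where "strict_mono \<sigma>" and "(\<lambda>n. J (s (\<sigma> n))) \<longlonglongrightarrow> z"
proof -
  obtain z0 where z0: "z0 \<in> zeros_op A"
    using \<open>zeros_op A \<noteq> {}\<close> by blast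
  obtain K where bounded: "\<And>n. norm ((x (s n) - J (s n)) /\<^sub>R lam (s n)) \<le> K"
    using BseqE[OF convergent_imp_Bseq[OF convergentI[OF scaled_velocity]]] by blast
  define r where "r = norm z0 + norm (x 0 - z0) + 1"
  define \<kappa> where "\<kappa> = real_of_ereal (\<Phi> z0) + K * norm (x 0 - z0)"
  have "\<Phi> z0 \<noteq> \<infinity>"
    using z0 by (auto simp: A_eq zeros_op_def egradient_op_def edom_def)
  then have "\<Phi> z0 + ereal (K * norm (x 0 - z0)) = ereal \<kappa>"
    using ninf by (cases "\<Phi> z0") (auto simp: \<kappa>_def)
  then have "J (s n) \<in> {y. norm y \<le> r \<and> \<Phi> y \<le> ereal \<kappa>}" for n
    using resolvent_in_sublevel_if_gradient[OF ninf cvx A_eq z0 s[of n] bounded[of n]]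
    by (auto simp: r_def)
  then have in_closure: "\<forall>n. J (s n) \<in> closure {y. norm y \<le> r \<and> \<Phi> y \<le> ereal \<kappa>}"
    using closure_subset by blast
  have "0 < r"
    unfolding r_def by (smt (verit) norm_ge_zero)
  then have compact: "seq_compact (closure {y. norm y \<le> r \<and> \<Phi> y \<le> ereal \<kappa>})"
    using ic unfolding inf_compact_def by (simp add: compact_imp_seq_compact)
  from seq_compactE[OF compact in_closure]
  obtain z \<sigma> where "strict_mono \<sigma>" "((\<lambda>n. J (s n)) \<circ> \<sigma>) \<longlonglongrightarrow> z"
    by blast
  then show ?thesis
    by (intro that) (simp_all add: o_def)
qed

end

theorem theorem3p2:
  fixes A :: "'a::{real_inner, complete_space} \<Rightarrow> 'a set"
    and \<theta> :: real and p :: nat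
    and x :: "real \<Rightarrow> 'a" and lam :: "real \<Rightarrow> real"
  assumes maxmon: "maximal_monotone A"
    and zeros_ne: "zeros_op A \<noteq> {}"
    and theta_pos: "\<theta> > 0"
    and p_ge: "p \<ge> 1"
    and lam_pos: "\<forall>t\<ge>0. lam t > 0"
    and ode: "\<forall>t\<ge>0. (x has_vector_derivative
                 (resolvent A (lam t) (x t) - x t)) (at t within {0..})"
    and alg: "\<forall>t\<ge>0. lam t * norm (resolvent A (lam t) (x t) - x t) ^ (p - 1) = \<theta>"
    and init: "0 \<notin> A (x 0)"
    and cases: "(\<exists>\<Phi> :: 'a \<Rightarrow> ereal. (\<forall>y. \<Phi> y \<noteq> -\<infinity>) \<and> econvex \<Phi> \<and>
                   edifferentiable \<Phi> \<and> inf_compact \<Phi> \<and> A = egradient_op \<Phi>)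
               \<or> interior (zeros_op A) \<noteq> {}"
  shows "\<exists>xb \<in> zeros_op A. (x \<longlongrightarrow> xb) at_top"
proof -
  interpret proximal_flow A lam x
    using maxmon lam_pos ode by unfold_locales auto
  obtain s where s: "\<And>n. 0 \<le> s n" "filterlim s at_top sequentially"
    and velocity: "(\<lambda>n. J (s n) - x (s n)) \<longlonglongrightarrow> 0"
    using velocity_tendsto_zero_along_seq[OF zeros_ne] by blast
  have scaled: "(\<lambda>n. (x (s n) - J (s n)) /\<^sub>R lam (s n)) \<longlonglongrightarrow> 0"
    using scaled_velocity_tendsto_zero[OF _ theta_pos p_ge s(1) velocity] alg by blast
  obtain \<sigma> z where \<sigma>: "strict_mono \<sigma>" and z: "(\<lambda>n. J (s (\<sigma> n))) \<longlonglongrightarrow> z"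
    using cases
  proof (elim disjE exE conjE)
    fix \<Phi> :: "'a \<Rightarrow> ereal"
    assume "\<forall>y. \<Phi> y \<noteq> -\<infinity>" "econvex \<Phi>" "inf_compact \<Phi>" "A = egradient_op \<Phi>"
    then show thesis
      using resolvent_subseq_convergent_if_inf_compact zeros_ne s(1) scaled that by blast
  next
    assume "interior (zeros_op A) \<noteq> {}"
    then obtain L where "(x \<longlongrightarrow> L) at_top"
      by (rule convergent_if_interior_zeros_op)
    then have "(\<lambda>n. x (s n) + (J (s n) - x (s n))) \<longlonglongrightarrow> L + 0"
      by (intro tendsto_add filterlim_compose[OF _ s(2)] velocity)
    then show thesis
      using that[of id L] by (simp add: strict_mono_id)
  qed
  have "filterlim (s \<circ> \<sigma>) at_top sequentially"
    using filterlim_compose[OF s(2) filterlim_subseq[OF \<sigma>]] by (simp add: o_def)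
  then show ?thesis
    using tendsto_zeros_op_if_resolvent_seq_tendsto[of "s \<circ> \<sigma>" z] s(1) z
      LIMSEQ_subseq_LIMSEQ[OF velocity \<sigma>] LIMSEQ_subseq_LIMSEQ[OF scaled \<sigma>]
    by (auto simp: o_def)
qed

end
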